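(* Let $a,c\in\mathbb{N}$ and $b,d\in\mathbb{Z}$ with $a\neq c$. Then there exists a completely multiplicative function $f:\mathbb{N}\to\mathbb{S}^1$ such that $$\liminf_{n\to\infty}|f(an+b)-f(cn+d)|>0.$$
   Context: $\mathbb{N}=\{1,2,\dots\}$, $\mathbb{S}^1$ the unit circle in $\mathbb{C}$; completely multiplicative means $f(mn)=f(m)f(n)$ for all $m,n$. The expression is considered for $n$ large enough that $an+b,cn+d\ge1$. *)

theory Defs
  imports "HOL-Analysis.Analysis"
begin

text \<open>A completely multiplicative function from the positive integers to the unit
circle. Values at 0 are irrelevant (the domain is N = {1,2,...}).\<close>
definition cm_unimodular :: "(nat \<Rightarrow> complex) \<Rightarrow> bool" where
  "cm_unimodular f \<longleftrightarrow>
     (\<forall>n\<ge>1. norm (f n) = 1) \<and> (\<forall>m\<ge>1. \<forall>n\<ge>1. f (m * n) = f m * f n)"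

end

theory Submission
  imports Defs "HOL-Real_Asymp.Real_Asymp"
begin

text \<open>Take \<open>f(n) = n^{it}\<close>. Then \<open>|f(an+b) - f(cn+d)| = |((an+b)/(cn+d))^{it} - 1|\<close>, and
  since \<open>(an+b)/(cn+d) \<rightarrow> a/c \<noteq> 1\<close> this tends to \<open>|(a/c)^{it} - 1|\<close>. Choosing
  \<open>t = \<pi> / ln(a/c)\<close> makes the limit \<open>|e^{i\<pi>} - 1| = 2\<close>.\<close>

definition nat_imag_power :: "real \<Rightarrow> nat \<Rightarrow> complex" where
  "nat_imag_power t n = cis (t * ln (real n))"

lemma cm_unimodular_nat_imag_power: "cm_unimodular (nat_imag_power t)"
  unfolding cm_unimodular_def nat_imag_power_def
  by (auto simp: ln_mult distrib_left cis_mult)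

lemma norm_cis_diff: "norm (cis u - cis v) = norm (cis (u - v) - 1)"
proof -
  have "cis u - cis v = cis v * (cis (u - v) - 1)"
    by (simp add: cis_mult right_diff_distrib)
  thus ?thesis by (simp add: norm_mult)
qed

lemma norm_cis_ln_diff:
  assumes "x > 0" "y > 0"
  shows "norm (cis (t * ln x) - cis (t * ln y)) = norm (cis (t * ln (x / y)) - 1)"
  using assms by (simp add: norm_cis_diff ln_div right_diff_distrib)

lemma eventually_nat_affine:
  assumes "a > 0"
  shows "eventually (\<lambda>n. real a * real n + real_of_int b > 0 \<and>
           real (nat (int a * int n + b)) = real a * real n + real_of_int b) sequentially"
  using eventually_ge_at_top[of "nat (\<bar>b\<bar> + 1)"]
proof eventually_elim
  case (elim n)
  have "n \<le> a * n" using assms by simp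
  hence "int n \<le> int a * int n" by (metis of_nat_le_iff of_nat_mult)
  with elim have "int a * int n + b > 0" by linarith
  hence "real_of_int (int a * int n + b) > 0" by (simp only: of_int_0_less_iff)
  moreover have "real (nat (int a * int n + b)) = real_of_int (int a * int n + b)"
    using \<open>int a * int n + b > 0\<close> by (simp only: of_nat_nat less_imp_le)
  ultimately show ?case by simp
qed

lemma tendsto_affine_ratio:
  assumes "a > 0" "c > 0"
  shows "(\<lambda>n::nat. (real a * real n + real_of_int b) / (real c * real n + real_of_int d))
           \<longlonglongrightarrow> real a / real c"
  using assms by real_asymp (simp add: divide_inverse)

lemma tendsto_norm_nat_imag_power_affine:
  assumes "a > 0" "c > 0"
  shows "(\<lambda>n. norm (nat_imag_power t (nat (int a * int n + b)) - nat_imag_power t (nat (int c * int n + d))))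
           \<longlonglongrightarrow> norm (cis (t * ln (real a / real c)) - 1)"
proof -
  let ?r = "\<lambda>n::nat. (real a * real n + real_of_int b) / (real c * real n + real_of_int d)"
  have "(\<lambda>n. norm (cis (t * ln (?r n)) - 1)) \<longlonglongrightarrow> norm (cis (t * ln (real a / real c)) - 1)"
    using assms by (intro tendsto_intros tendsto_affine_ratio) auto
  moreover have "eventually (\<lambda>n. norm (cis (t * ln (?r n)) - 1) =
      norm (nat_imag_power t (nat (int a * int n + b)) - nat_imag_power t (nat (int c * int n + d)))) sequentially"
    using eventually_nat_affine[OF assms(1), of b] eventually_nat_affine[OF assms(2), of d]
    by eventually_elim (simp add: nat_imag_power_def norm_cis_ln_diff)
  ultimately show ?thesis by (rule Lim_transform_eventually)
qed

theorem lemma4p1: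
  fixes a c :: nat and b d :: int
  assumes "a \<ge> 1" and "c \<ge> 1" and "a \<noteq> c"
  shows "\<exists>f. cm_unimodular f \<and>
           liminf (\<lambda>n::nat. ereal (norm (f (nat (int a * int n + b)) - f (nat (int c * int n + d))))) > 0"
proof -
  have "real a / real c \<noteq> 1" "real a / real c > 0"
    using assms by auto
  hence ln_ratio: "ln (real a / real c) \<noteq> 0" by simp
  define t where "t = pi / ln (real a / real c)"
  define f where "f = nat_imag_power t"
  have "norm (cis (t * ln (real a / real c)) - 1) = 2"
    using ln_ratio by (simp add: t_def)
  hence "(\<lambda>n. ereal (norm (f (nat (int a * int n + b)) - f (nat (int c * int n + d))))) \<longlonglongrightarrow> ereal 2"
    using tendsto_norm_nat_imag_power_affine[of a c t b d] assms
    by (intro tendsto_ereal) (simp add: f_def)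
  hence "liminf (\<lambda>n. ereal (norm (f (nat (int a * int n + b)) - f (nat (int c * int n + d))))) = 2"
    by (intro lim_imp_Liminf) auto
  thus ?thesis
    using cm_unimodular_nat_imag_power by (intro exI[of _ f]) (simp add: f_def)
qed

end
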